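(* Let $P$ be a finitely generated abelian group and $A\subset P$ a subgroup. For subgroups $B,B'$ with $A\subset B\subset P$ and $A\subset B'\subset P$, say that $B$ and $B'$ are equivalent if there is an isomorphism $B\to B'$ which restricts to the identity on $A$. Then there are only finitely many equivalence classes. *)

theory Defs
  imports "HOL-Algebra.Algebra"
begin

definition fin_gen_group :: "('a, 'b) monoid_scheme \<Rightarrow> bool" where
  "fin_gen_group P \<longleftrightarrow> (\<exists>S. finite S \<and> S \<subseteq> carrier P \<and> generate P S = carrier P)"

definition intermediate_subgroups :: "('a, 'b) monoid_scheme \<Rightarrow> 'a set \<Rightarrow> 'a set set" where
  "intermediate_subgroups P A = {B. subgroup B P \<and> A \<subseteq> B}"

definition rel_equiv :: "('a, 'b) monoid_scheme \<Rightarrow> 'a set \<Rightarrow> 'a set \<Rightarrow> 'a set \<Rightarrow> bool" where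
  "rel_equiv P A B B' \<longleftrightarrow>
     (\<exists>f \<in> iso (P\<lparr>carrier := B\<rparr>) (P\<lparr>carrier := B'\<rparr>). \<forall>a\<in>A. f a = a)"

definition rel_equiv_rel :: "('a, 'b) monoid_scheme \<Rightarrow> 'a set \<Rightarrow> ('a set \<times> 'a set) set" where
  "rel_equiv_rel P A = {(B, B'). B \<in> intermediate_subgroups P A \<and> B' \<in> intermediate_subgroups P A
                                 \<and> rel_equiv P A B B'}"

end

theory Submission
  imports Defs
begin

text \<open>Let \<open>A'\<close> consist of the elements of \<open>P\<close> having a positive power in \<open>A\<close>. It is
  generated over \<open>A\<close> by finitely many elements of finite order modulo \<open>A\<close>, so \<open>A'/A\<close> is
  finite and only finitely many subgroups lie between \<open>A\<close> and \<open>A'\<close>. An intermediate subgroup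
  \<open>B\<close> contains \<open>C = B \<inter> A'\<close> as a saturated subgroup, so \<open>B/C\<close> is finitely generated and
  torsion free, hence free of a rank \<open>k\<close> bounded by the number of generators of \<open>P\<close>. Lifting a
  basis gives \<open>B \<cong> C \<oplus> \<int>\<^sup>k\<close> by an isomorphism fixing \<open>C\<close>, so the class of \<open>B\<close> is determined
  by the pair \<open>(C, k)\<close>, which takes only finitely many values.\<close>

definition adjoin :: "('a, 'b) monoid_scheme \<Rightarrow> 'a set \<Rightarrow> 'a \<Rightarrow> 'a set" where
  "adjoin G H g = {h \<otimes>\<^bsub>G\<^esub> g [^]\<^bsub>G\<^esub> (a::int) | h a. h \<in> H}"

fun span_over :: "('a, 'b) monoid_scheme \<Rightarrow> 'a set \<Rightarrow> 'a list \<Rightarrow> 'a set" where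
  "span_over G H [] = H"
| "span_over G H (g # gs) = adjoin G (span_over G H gs) g"

text \<open>For \<open>H \<subseteq> B\<close>, \<open>saturation G B H / H\<close> is the torsion subgroup of \<open>B / H\<close>.\<close>

definition saturation :: "('a, 'b) monoid_scheme \<Rightarrow> 'a set \<Rightarrow> 'a set \<Rightarrow> 'a set" where
  "saturation G B H = {x \<in> B. \<exists>m::nat. m > 0 \<and> x [^]\<^bsub>G\<^esub> m \<in> H}"

definition free_over :: "('a, 'b) monoid_scheme \<Rightarrow> 'a set \<Rightarrow> 'a \<Rightarrow> bool" where
  "free_over G H g \<longleftrightarrow> (\<forall>a::int. g [^]\<^bsub>G\<^esub> a \<in> H \<longrightarrow> a = 0)"

text \<open>\<open>free_extension G C n B\<close>: \<open>B = C \<oplus> \<int>\<^sup>n\<close>, with \<open>C\<close> as the given summand.\<close>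

inductive free_extension :: "('a, 'b) monoid_scheme \<Rightarrow> 'a set \<Rightarrow> nat \<Rightarrow> 'a set \<Rightarrow> bool"
  for G C where
  base: "subgroup C G \<Longrightarrow> free_extension G C 0 C"
| step: "free_extension G C n H \<Longrightarrow> g \<in> carrier G \<Longrightarrow> free_over G H g \<Longrightarrow>
    free_extension G C (Suc n) (adjoin G H g)"

lemma int_ideal_principal:
  fixes I :: "int set"
  assumes zero: "0 \<in> I"
    and add: "\<And>a b. a \<in> I \<Longrightarrow> b \<in> I \<Longrightarrow> a + b \<in> I"
    and mult: "\<And>a z. a \<in> I \<Longrightarrow> z * a \<in> I"
  obtains d where "I = {a. d dvd a}"
proof (cases "I \<subseteq> {0}")
  case True
  then show ?thesis using zero by (intro that[of 0]) auto
next
  case False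
  then obtain M where M: "M \<in> I" "M \<noteq> 0" by blast
  have "sgn M * M \<in> I" using mult M(1) by blast
  then have absM: "\<bar>M\<bar> \<in> I" by (simp add: abs_sgn mult.commute)
  define S where "S = I \<inter> {1..\<bar>M\<bar>}"
  have S: "finite S" "\<bar>M\<bar> \<in> S" using absM M(2) by (auto simp: S_def)
  define d where "d = Min S"
  have "d \<in> S" unfolding d_def using S by (intro Min_in) auto
  then have d: "d \<in> I" "d > 0" by (auto simp: S_def)
  have "d dvd a" if a: "a \<in> I" for a
  proof -
    have "a + (- (a div d)) * d \<in> I" using add[OF a mult[OF d(1)]] .
    then have rem: "a mod d \<in> I" by (simp flip: minus_div_mult_eq_mod)
    have "\<not> 0 < a mod d"
    proof
      assume "0 < a mod d"
      moreover have "a mod d < d" "d \<le> \<bar>M\<bar>" using d(2) Min_le[OF S] by (auto simp: d_def)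
      ultimately have "a mod d \<in> S" using rem by (auto simp: S_def)
      then have "d \<le> a mod d" unfolding d_def by (intro Min_le S(1))
      then show False using \<open>a mod d < d\<close> by simp
    qed
    then have "a mod d = 0" using pos_mod_sign[of d a] d(2) by linarith
    then show ?thesis by (simp add: dvd_eq_mod_eq_0)
  qed
  moreover have "a \<in> I" if "d dvd a" for a
    using that mult[OF d(1)] by (auto elim: dvdE simp: mult.commute)
  ultimately show ?thesis by (intro that[of d]) blast
qed

lemma (in group) int_pow_mem_subgroup_iff_dvd:
  assumes H: "subgroup H G" and g: "g \<in> carrier G"
  obtains d :: int where "{a. g [^] a \<in> H} = {a. d dvd a}"
proof -
  define I where "I = {a::int. g [^] a \<in> H}"
  have "0 \<in> I" using subgroup.one_closed[OF H] by (simp add: I_def)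
  moreover have "a + b \<in> I" if "a \<in> I" "b \<in> I" for a b
    using that g by (simp add: I_def int_pow_mult subgroup.m_closed[OF H])
  moreover have "z * a \<in> I" if "a \<in> I" for a z
    using that g subgroup_int_pow_closed[OF H, of "g [^] a" z]
    by (simp add: I_def int_pow_pow mult.commute)
  ultimately obtain d where "I = {a. d dvd a}"
    by (rule int_ideal_principal)
  then show thesis using that by (simp add: I_def)
qed

context comm_group
begin

section \<open>Subgroups generated over a subgroup\<close>

lemma adjoin_memI: "h \<in> H \<Longrightarrow> h \<otimes> g [^] (a::int) \<in> adjoin G H g"
  unfolding adjoin_def by blast

lemma adjoin_memE:
  assumes "x \<in> adjoin G H g"
  obtains h and a :: int where "h \<in> H" "x = h \<otimes> g [^] a"
  using assms unfolding adjoin_def by blast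

lemma adjoin_subgroup:
  assumes H: "subgroup H G" and g: "g \<in> carrier G"
  shows "subgroup (adjoin G H g) G"
proof (rule subgroupI)
  interpret H: subgroup H G by fact
  show "adjoin G H g \<subseteq> carrier G" using g by (auto elim!: adjoin_memE)
  show "adjoin G H g \<noteq> {}" using adjoin_memI[OF H.one_closed] by blast
  fix x y assume "x \<in> adjoin G H g" "y \<in> adjoin G H g"
  then obtain h1 h2 and a1 a2 :: int where
    x: "h1 \<in> H" "x = h1 \<otimes> g [^] a1" and y: "h2 \<in> H" "y = h2 \<otimes> g [^] a2"
    by (auto elim!: adjoin_memE)
  have "inv x = inv h1 \<otimes> g [^] (- a1)" using x g by (simp add: inv_mult int_pow_neg)
  then show "inv x \<in> adjoin G H g" using x by (simp add: adjoin_memI)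
  have "x \<otimes> y = (h1 \<otimes> h2) \<otimes> g [^] (a1 + a2)" using x y g by (simp add: int_pow_mult m_ac)
  then show "x \<otimes> y \<in> adjoin G H g" using x y by (simp add: adjoin_memI)
qed

lemma subset_adjoin:
  assumes "subgroup H G" "g \<in> carrier G" shows "H \<subseteq> adjoin G H g"
proof
  fix h assume "h \<in> H"
  then show "h \<in> adjoin G H g"
    using adjoin_memI[of h H g 0] assms by (simp add: int_pow_0 subgroup.mem_carrier)
qed

lemma generator_mem_adjoin: "subgroup H G \<Longrightarrow> g \<in> carrier G \<Longrightarrow> g \<in> adjoin G H g"
  using adjoin_memI[of \<one> H g 1] by (simp add: subgroup.one_closed)

lemma adjoin_subset: "subgroup K G \<Longrightarrow> H \<subseteq> K \<Longrightarrow> g \<in> K \<Longrightarrow> adjoin G H g \<subseteq> K"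
  by (auto elim!: adjoin_memE intro: subgroup_int_pow_closed subgroup.m_closed)

lemma adjoin_mono: "H \<subseteq> K \<Longrightarrow> adjoin G H g \<subseteq> adjoin G K g"
  unfolding adjoin_def by blast

lemma adjoin_decomp_unique:
  assumes H: "subgroup H G" and g: "g \<in> carrier G" and free: "free_over G H g"
    and h: "h1 \<in> H" "h2 \<in> H" and eq: "h1 \<otimes> g [^] (a1::int) = h2 \<otimes> g [^] (a2::int)"
  shows "h1 = h2 \<and> a1 = a2"
proof -
  have hc: "h1 \<in> carrier G" "h2 \<in> carrier G" using h subgroup.mem_carrier[OF H] by auto
  have "g [^] a1 = inv h1 \<otimes> (h2 \<otimes> g [^] a2)"
    using eq hc g by (metis inv_solve_left int_pow_closed m_closed)
  then have "g [^] (a1 - a2) = inv h1 \<otimes> h2"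
    using hc g by (simp add: int_pow_diff m_assoc)
  also have "\<dots> \<in> H" using h H by (simp add: subgroup.m_closed subgroup.m_inv_closed)
  finally have "a1 - a2 = 0" using free unfolding free_over_def by blast
  with eq hc g show ?thesis by (metis eq_iff_diff_eq_0 int_pow_closed r_cancel)
qed

lemma span_over_subgroup: "subgroup H G \<Longrightarrow> set gs \<subseteq> carrier G \<Longrightarrow> subgroup (span_over G H gs) G"
  by (induction gs) (auto intro: adjoin_subgroup)

lemma subset_span_over: "subgroup H G \<Longrightarrow> set gs \<subseteq> carrier G \<Longrightarrow> H \<subseteq> span_over G H gs"
  by (induction gs) (auto dest: subset_adjoin[OF span_over_subgroup])

lemma generators_subset_span_over:
  "subgroup H G \<Longrightarrow> set gs \<subseteq> carrier G \<Longrightarrow> set gs \<subseteq> span_over G H gs"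
  by (induction gs)
    (auto dest: generator_mem_adjoin[OF span_over_subgroup] subset_adjoin[OF span_over_subgroup])

lemma span_over_subset: "subgroup K G \<Longrightarrow> H \<subseteq> K \<Longrightarrow> set gs \<subseteq> K \<Longrightarrow> span_over G H gs \<subseteq> K"
  by (induction gs) (simp_all add: adjoin_subset)

lemma span_over_mono: "H \<subseteq> K \<Longrightarrow> span_over G H gs \<subseteq> span_over G K gs"
  by (induction gs) (auto dest: adjoin_mono[THEN subsetD])

section \<open>Saturation\<close>

lemma saturation_subgroup:
  assumes B: "subgroup B G" and H: "subgroup H G"
  shows "subgroup (saturation G B H) G"
proof (rule subgroupI)
  interpret B: subgroup B G by fact
  show "saturation G B H \<subseteq> carrier G" by (auto simp: saturation_def)
  have "\<one> \<in> saturation G B H"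
    using subgroup.one_closed[OF H] by (auto simp: saturation_def intro!: exI[of _ "1::nat"])
  then show "saturation G B H \<noteq> {}" by blast
  fix x y assume "x \<in> saturation G B H" "y \<in> saturation G B H"
  then obtain m n :: nat where
    x: "x \<in> B" "m > 0" "x [^] m \<in> H" and y: "y \<in> B" "n > 0" "y [^] n \<in> H"
    unfolding saturation_def by blast
  have "inv x [^] m = inv (x [^] m)" using x by (simp add: nat_pow_inv)
  then show "inv x \<in> saturation G B H"
    using x H by (auto simp: saturation_def subgroup.m_inv_closed)
  have "(x \<otimes> y) [^] (m * n) = (x [^] m) [^] n \<otimes> (y [^] n) [^] m"
    using x y by (simp add: nat_pow_distrib nat_pow_pow mult.commute)
  also have "\<dots> \<in> H"
    using x y H by (metis int_pow_int subgroup.m_closed subgroup_int_pow_closed)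
  finally show "x \<otimes> y \<in> saturation G B H"
    using x y by (auto simp: saturation_def intro!: exI[of _ "m * n"])
qed

lemma saturation_mono: "H \<subseteq> K \<Longrightarrow> saturation G B H \<subseteq> saturation G B K"
  by (auto simp: saturation_def)

lemma subset_saturation: "subgroup B G \<Longrightarrow> H \<subseteq> B \<Longrightarrow> H \<subseteq> saturation G B H"
  by (auto simp: saturation_def subgroup.mem_carrier intro!: exI[of _ "1::nat"])

lemma saturation_saturation_subset:
  assumes "B \<subseteq> carrier G"
  shows "saturation G B (saturation G B H) \<subseteq> saturation G B H"
proof
  fix x assume "x \<in> saturation G B (saturation G B H)"
  then obtain m n :: nat where "x \<in> B" "m > 0" "n > 0" "(x [^] m) [^] n \<in> H"
    unfolding saturation_def by blast
  then show "x \<in> saturation G B H"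
    using assms by (auto simp: saturation_def nat_pow_pow intro!: exI[of _ "m * n"])
qed

lemma saturation_int_pow:
  assumes H: "subgroup H G" and x: "x \<in> B" "x \<in> carrier G"
    and a: "a \<noteq> 0" "x [^] (a::int) \<in> H"
  shows "x \<in> saturation G B H"
proof -
  have "x [^] \<bar>a\<bar> \<in> H"
  proof (cases "a > 0")
    case False
    then have "x [^] \<bar>a\<bar> = inv (x [^] a)" using x(2) by (simp add: int_pow_neg[symmetric])
    then show ?thesis using a H by (simp add: subgroup.m_inv_closed)
  qed (use a in simp)
  then have "x [^] nat \<bar>a\<bar> \<in> H" by (simp add: pow_nat)
  then show ?thesis using x a by (auto simp: saturation_def intro!: exI[of _ "nat \<bar>a\<bar>"])
qed

lemma saturation_mem_subgroups_below:
  assumes "subgroup A G" "subgroup B G" "A \<subseteq> B"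
  shows "saturation G B A \<in> {C. subgroup C G \<and> A \<subseteq> C \<and> C \<subseteq> saturation G (carrier G) A}"
  using saturation_subgroup[OF assms(2,1)] subset_saturation[OF assms(2,3)] subgroup.subset[OF assms(2)]
  by (auto simp: saturation_def)

section \<open>Subgroups of finitely generated abelian groups\<close>

lemma pow_image_subgroup:
  assumes B: "subgroup B G"
  shows "subgroup ((\<lambda>x. x [^] (m::nat)) ` B) G"
proof (rule subgroupI)
  interpret B: subgroup B G by fact
  show "(\<lambda>x. x [^] m) ` B \<subseteq> carrier G" by auto
  show "(\<lambda>x. x [^] m) ` B \<noteq> {}" using B.one_closed by blast
  fix x y assume "x \<in> (\<lambda>x. x [^] m) ` B" "y \<in> (\<lambda>x. x [^] m) ` B"
  then obtain u v where uv: "u \<in> B" "v \<in> B" "x = u [^] m" "y = v [^] m" by blast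
  then have "inv x = inv u [^] m" "x \<otimes> y = (u \<otimes> v) [^] m"
    by (simp_all add: nat_pow_inv nat_pow_distrib)
  then show "inv x \<in> (\<lambda>x. x [^] m) ` B" "x \<otimes> y \<in> (\<lambda>x. x [^] m) ` B"
    using uv by auto
qed

lemma pow_preimage_subgroup:
  assumes K: "subgroup K G"
  shows "subgroup {x \<in> carrier G. x [^] (m::nat) \<in> K} G"
proof (rule subgroupI)
  show "{x \<in> carrier G. x [^] m \<in> K} \<noteq> {}" using subgroup.one_closed[OF K] by auto
qed (auto simp: nat_pow_inv nat_pow_distrib intro: subgroup.m_closed[OF K] subgroup.m_inv_closed[OF K])

lemma span_over_uniform_exponent:
  assumes K: "subgroup K G" and bs: "set bs \<subseteq> carrier G"
    and tors: "\<forall>b\<in>set bs. \<exists>m::nat. m > 0 \<and> b [^] m \<in> K"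
  obtains M :: nat where "M > 0" "\<forall>x\<in>span_over G {\<one>} bs. x [^] M \<in> K"
proof -
  have multiple: "x [^] (m * k) \<in> K" if "x \<in> carrier G" "x [^] m \<in> K" for x and m k :: nat
    using that K by (metis nat_pow_pow int_pow_int subgroup_int_pow_closed)
  have "\<exists>M::nat. M > 0 \<and> (\<forall>b\<in>set bs. b [^] M \<in> K)"
    using bs tors
  proof (induction bs)
    case (Cons b bs)
    obtain M :: nat where M: "M > 0" "\<forall>c\<in>set bs. c [^] M \<in> K" using Cons by auto
    obtain m :: nat where m: "m > 0" "b [^] m \<in> K" using Cons.prems by auto
    have "b [^] (m * M) \<in> K" using multiple[of b m M] m Cons.prems by simp
    moreover have "c [^] (m * M) \<in> K" if "c \<in> set bs" for c
      using multiple[of c M m] M that Cons.prems by (auto simp: mult.commute)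
    ultimately have "\<forall>c\<in>set (b # bs). c [^] (m * M) \<in> K" by simp
    then show ?case using M m by (intro exI[of _ "m * M"]) simp
  qed (auto intro: exI[of _ 1])
  then obtain M :: nat where M: "M > 0" "\<forall>b\<in>set bs. b [^] M \<in> K" by blast
  have "span_over G {\<one>} bs \<subseteq> {x \<in> carrier G. x [^] M \<in> K}"
    using M(2) bs subgroup.one_closed[OF K]
    by (intro span_over_subset pow_preimage_subgroup[OF K]) auto
  then show thesis using M(1) that by blast
qed

text \<open>The exponents \<open>a\<close> with \<open>g\<^sup>a \<in> L B\<close> form an ideal \<open>d\<int>\<close>; \<open>b\<close> is the \<open>B\<close>-part of \<open>g\<^sup>d\<close>.\<close>

lemma subgroup_of_adjoin:
  assumes L: "subgroup L G" and B: "subgroup B G" and g: "g \<in> carrier G"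
    and BL: "B \<subseteq> adjoin G L g"
  obtains b where "b \<in> B" "B = adjoin G (B \<inter> L) b"
proof -
  interpret L: subgroup L G by fact
  interpret B: subgroup B G by fact
  obtain d :: int where d: "{a. g [^] a \<in> L <#> B} = {a. d dvd a}"
    by (rule int_pow_mem_subgroup_iff_dvd[OF mult_subgroups[OF L B] g])
  have "d \<in> {a. g [^] a \<in> L <#> B}" unfolding d by simp
  then have "g [^] d \<in> L <#> B" by simp
  then obtain l b where lb: "l \<in> L" "b \<in> B" "g [^] d = l \<otimes> b"
    unfolding set_mult_def by blast
  have "B \<subseteq> adjoin G (B \<inter> L) b"
  proof
    fix x assume x: "x \<in> B"
    then obtain y and a :: int where y: "y \<in> L" "x = y \<otimes> g [^] a"
      using BL by (blast elim: adjoin_memE)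
    have yc: "y \<in> carrier G" and lc: "l \<in> carrier G" using y lb by auto
    have "g [^] a = inv y \<otimes> x" using x y g by (simp add: inv_solve_left)
    then have "g [^] a \<in> L <#> B" using x y unfolding set_mult_def by blast
    then have "d dvd a" using d by blast
    then obtain q where q: "a = d * q" by (rule dvdE)
    have "b = inv l \<otimes> g [^] d" using lb lc g by (simp add: inv_solve_left)
    then have "b [^] q = inv (l [^] q) \<otimes> g [^] a"
      using lc g q by (simp add: int_pow_distrib int_pow_inv int_pow_pow)
    then have x_eq: "x = (y \<otimes> l [^] q) \<otimes> b [^] q"
      using y(2) yc lc g by (simp add: m_assoc[symmetric]) (simp add: m_assoc)
    then have "y \<otimes> l [^] q = x \<otimes> inv (b [^] q)"
      using x yc lc lb g by (simp add: inv_solve_right)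
    moreover have "x \<otimes> inv (b [^] q) \<in> B"
      using x lb(2) by (simp add: subgroup_int_pow_closed[OF B])
    moreover have "y \<otimes> l [^] q \<in> L"
      using y(1) lb(1) by (simp add: subgroup_int_pow_closed[OF L])
    ultimately have "y \<otimes> l [^] q \<in> B \<inter> L" by simp
    with x_eq show "x \<in> adjoin G (B \<inter> L) b" by (metis adjoin_memI)
  qed
  moreover have "adjoin G (B \<inter> L) b \<subseteq> B" using lb B by (intro adjoin_subset) auto
  ultimately show thesis using that lb by blast
qed

lemma subgroup_of_span_over:
  "set gs \<subseteq> carrier G \<Longrightarrow> subgroup B G \<Longrightarrow> B \<subseteq> span_over G {\<one>} gs \<Longrightarrow>
   \<exists>bs. set bs \<subseteq> B \<and> length bs \<le> length gs \<and> B = span_over G {\<one>} bs"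
proof (induction gs arbitrary: B)
  case Nil
  then have "B = {\<one>}" using subgroup.one_closed[of B G] by auto
  then show ?case by (intro exI[of _ "[]"]) auto
next
  case (Cons g gs)
  define L where "L = span_over G {\<one>} gs"
  have L: "subgroup L G" unfolding L_def using Cons.prems(1) by (simp add: span_over_subgroup triv_subgroup)
  obtain b where b: "b \<in> B" "B = adjoin G (B \<inter> L) b"
    using subgroup_of_adjoin[OF L Cons.prems(2)] Cons.prems(1,3) by (auto simp: L_def)
  obtain bs where bs: "set bs \<subseteq> B \<inter> L" "length bs \<le> length gs" "B \<inter> L = span_over G {\<one>} bs"
    using Cons.IH[of "B \<inter> L"] Cons.prems(1,2) L by (auto simp: L_def subgroups_Inter_pair)
  show ?case using b bs by (intro exI[of _ "b # bs"]) auto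
qed

lemma span_over_finite_cosets:
  assumes A: "subgroup A G"
  shows "set hs \<subseteq> carrier G \<Longrightarrow> \<forall>h\<in>set hs. \<exists>m::nat. m > 0 \<and> h [^] m \<in> A \<Longrightarrow>
    \<exists>R. finite R \<and> R \<subseteq> carrier G \<and> span_over G A hs \<subseteq> A <#> R"
proof (induction hs)
  case Nil
  have "A \<subseteq> A <#> {\<one>}" using A by (auto simp: set_mult_def subgroup.mem_carrier)
  then show ?case by (intro exI[of _ "{\<one>}"]) auto
next
  case (Cons h hs)
  have h: "h \<in> carrier G" using Cons.prems by auto
  obtain R where R: "finite R" "R \<subseteq> carrier G" "span_over G A hs \<subseteq> A <#> R"
    using Cons by auto
  obtain m :: nat where m: "m > 0" "h [^] m \<in> A" using Cons.prems(2) by auto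
  define R' where "R' = (\<lambda>(r, k). r \<otimes> h [^] (int k)) ` (R \<times> {..<m})"
  have "span_over G A (h # hs) \<subseteq> A <#> R'"
  proof
    fix x assume "x \<in> span_over G A (h # hs)"
    then obtain y and a :: int where y: "y \<in> span_over G A hs" "x = y \<otimes> h [^] a"
      by (auto elim: adjoin_memE)
    obtain a0 r where r: "a0 \<in> A" "r \<in> R" "y = a0 \<otimes> r" using R(3) y(1) unfolding set_mult_def by blast
    have a0: "a0 \<in> carrier G" and rc: "r \<in> carrier G" using r R(2) A by (auto simp: subgroup.mem_carrier)
    define k where "k = nat (a mod int m)"
    have k: "int k = a mod int m" "k < m" using m by (auto simp: k_def nat_less_iff)
    have "a = int m * (a div int m) + int k" using k by simp
    then have "h [^] a = h [^] (int m * (a div int m)) \<otimes> h [^] (int k)"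
      using h by (metis int_pow_mult)
    then have "h [^] a = (h [^] m) [^] (a div int m) \<otimes> h [^] (int k)"
      using h by (simp add: int_pow_pow int_pow_int[symmetric])
    then have "x = (a0 \<otimes> (h [^] m) [^] (a div int m)) \<otimes> (r \<otimes> h [^] (int k))"
      using a0 rc h by (simp add: y r m_ac)
    moreover have "a0 \<otimes> (h [^] m) [^] (a div int m) \<in> A"
      using r m A by (simp add: subgroup.m_closed subgroup_int_pow_closed)
    moreover have "r \<otimes> h [^] (int k) \<in> R'" using r k by (force simp: R'_def)
    ultimately show "x \<in> A <#> R'" unfolding set_mult_def by blast
  qed
  moreover have "finite R'" "R' \<subseteq> carrier G" using R h by (auto simp: R'_def)
  ultimately show ?case by blast
qed

lemma finite_subgroups_between:
  assumes A: "subgroup A G" and R: "finite R" "R \<subseteq> carrier G"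
  shows "finite {C. subgroup C G \<and> A \<subseteq> C \<and> C \<subseteq> A <#> R}"
proof -
  let ?Cs = "{C. subgroup C G \<and> A \<subseteq> C \<and> C \<subseteq> A <#> R}"
  have "C1 \<subseteq> C2" if C: "C1 \<in> ?Cs" "C2 \<in> ?Cs" and eq: "C1 \<inter> R = C2 \<inter> R" for C1 C2
  proof
    fix x assume x: "x \<in> C1"
    then obtain a r where ar: "a \<in> A" "r \<in> R" "x = a \<otimes> r"
      using C(1) unfolding set_mult_def by blast
    have "r = inv a \<otimes> x" using ar A R(2) by (auto simp: subgroup.mem_carrier inv_solve_left)
    moreover have "inv a \<otimes> x \<in> C1"
      using C(1) ar(1) x by (blast intro: subgroup.m_closed subgroup.m_inv_closed)
    ultimately have "r \<in> C1" by simp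
    then have "r \<in> C2" using eq ar by blast
    then show "x \<in> C2" using C(2) ar by (auto intro: subgroup.m_closed)
  qed
  then have "inj_on (\<lambda>C. C \<inter> R) ?Cs" by (intro inj_onI) blast
  moreover have "(\<lambda>C. C \<inter> R) ` ?Cs \<subseteq> Pow R" by blast
  ultimately show ?thesis using R(1) by (meson finite_Pow_iff finite_imageD finite_subset)
qed

lemma subset_adjoin_of_powers:
  assumes D: "subgroup D G" and B: "subgroup B G" and satD: "saturation G B D \<subseteq> D"
    and f: "f \<in> B" and M: "M > 0" and powers: "\<forall>x\<in>B. x [^] (M::nat) \<in> adjoin G D (f [^] M)"
  shows "B \<subseteq> adjoin G D f"
proof
  fix x assume x: "x \<in> B"
  then obtain c and q :: int where c: "c \<in> D" "x [^] M = c \<otimes> (f [^] M) [^] q"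
    using powers by (blast elim: adjoin_memE)
  have xc: "x \<in> carrier G" and fc: "f \<in> carrier G" and cc: "c \<in> carrier G"
    using x f c B D by (auto simp: subgroup.mem_carrier)
  have "(f [^] (- q)) [^] M = inv ((f [^] M) [^] q)"
    using fc by (simp add: int_pow_pow int_pow_neg int_pow_inv mult.commute flip: int_pow_int)
  then have "(x \<otimes> f [^] (- q)) [^] M = x [^] M \<otimes> inv ((f [^] M) [^] q)"
    using xc fc by (simp add: nat_pow_distrib)
  also have "\<dots> = c" using c xc fc cc by (simp add: m_assoc)
  finally have "x \<otimes> f [^] (- q) \<in> saturation G B D"
    using x f c M B by (auto simp: saturation_def subgroup_int_pow_closed intro: subgroup.m_closed)
  then have "x \<otimes> f [^] (- q) \<in> D" using satD by blast
  moreover have "x = (x \<otimes> f [^] (- q)) \<otimes> f [^] q"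
    using xc fc by (simp add: m_assoc int_pow_neg)
  ultimately show "x \<in> adjoin G D f" by (metis adjoin_memI)
qed

text \<open>For a uniform exponent \<open>M\<close> of \<open>B\<close> over \<open>D\<langle>g\<rangle>\<close>, the subgroup of \<open>M\<close>-th powers of \<open>B\<close> lies
  in \<open>D\<langle>g\<rangle>\<close> and so has the form \<open>(B\<^sup>M \<inter> D)\<langle>f\<^sup>M\<rangle>\<close>; as \<open>D\<close> is saturated in \<open>B\<close>, \<open>B = D\<langle>f\<rangle>\<close>.\<close>

lemma split_off_free_generator:
  assumes D: "subgroup D G" and bs: "set bs \<subseteq> carrier G" and B: "B = span_over G {\<one>} bs"
    and DB: "D \<subseteq> B" and satD: "saturation G B D \<subseteq> D"
    and g: "g \<in> B" "free_over G D g"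
    and tors: "saturation G B (adjoin G D g) = B"
  obtains f where "f \<in> B" "free_over G D f" "B = adjoin G D f"
proof -
  have Bsub: "subgroup B G" unfolding B by (rule span_over_subgroup[OF triv_subgroup bs])
  have gc: "g \<in> carrier G" using g(1) subgroup.mem_carrier[OF Bsub] by blast
  have K: "subgroup (adjoin G D g) G" by (rule adjoin_subgroup[OF D gc])
  have "\<forall>b\<in>set bs. \<exists>m::nat. m > 0 \<and> b [^] m \<in> adjoin G D g"
    using generators_subset_span_over[OF triv_subgroup bs] tors B by (auto simp: saturation_def)
  then obtain M :: nat where M: "M > 0" "\<forall>x\<in>span_over G {\<one>} bs. x [^] M \<in> adjoin G D g"
    by (rule span_over_uniform_exponent[OF K bs])
  define B' where "B' = (\<lambda>x. x [^] M) ` B"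
  have B': "subgroup B' G" unfolding B'_def by (rule pow_image_subgroup[OF Bsub])
  have "B' \<subseteq> adjoin G D g" using M(2) B by (auto simp: B'_def)
  then obtain b' where b': "b' \<in> B'" "B' = adjoin G (B' \<inter> D) b'"
    by (rule subgroup_of_adjoin[OF D B' gc])
  obtain f where f: "f \<in> B" "b' = f [^] M" using b'(1) by (auto simp: B'_def)
  have fc: "f \<in> carrier G" using f(1) subgroup.mem_carrier[OF Bsub] by blast
  have "B' \<subseteq> adjoin G D (f [^] M)"
    by (subst b'(2)) (use adjoin_mono[of "B' \<inter> D" D b'] f(2) in blast)
  then have "\<forall>x\<in>B. x [^] M \<in> adjoin G D (f [^] M)" by (auto simp: B'_def)
  then have "B = adjoin G D f"
    using subset_adjoin_of_powers[OF D Bsub satD f(1) M(1)] adjoin_subset[OF Bsub DB f(1)] by blast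
  moreover have "free_over G D f"
    unfolding free_over_def
  proof (intro allI impI, rule ccontr)
    fix a :: int assume "f [^] a \<in> D" "a \<noteq> 0"
    then have "f \<in> D" using satD saturation_int_pow[OF D f(1) fc] by blast
    then have "b' \<in> D" using f D by (metis int_pow_int subgroup_int_pow_closed)
    then have "B' \<subseteq> D" by (subst b'(2)) (rule adjoin_subset[OF D]; blast)
    moreover have "g [^] M \<in> B'" using g(1) by (auto simp: B'_def)
    ultimately have "g [^] (int M) \<in> D" unfolding int_pow_int by blast
    then show False using g(2) M(1) unfolding free_over_def by fastforce
  qed
  ultimately show thesis using that f(1) by blast
qed

section \<open>Free extensions\<close>

lemma free_extension_subgroup: "free_extension G C n B \<Longrightarrow> subgroup B G \<and> C \<subseteq> B"
  by (induction rule: free_extension.induct) (auto intro: adjoin_subgroup dest: subset_adjoin)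

lemma adjoin_extend_map:
  assumes H: "subgroup H G" and g: "g \<in> carrier G" and free: "free_over G H g"
  obtains \<psi> where "\<And>h a. h \<in> H \<Longrightarrow> \<psi> (h \<otimes> g [^] (a::int)) = \<phi> h \<otimes> g' [^] a"
proof -
  define e where "e = (\<lambda>(h, a::int). h \<otimes> g [^] a)"
  have inj: "inj_on e (H \<times> UNIV)"
    using adjoin_decomp_unique[OF H g free] by (auto simp: e_def inj_on_def)
  let ?\<psi> = "(\<lambda>(h, a). \<phi> h \<otimes> g' [^] a) \<circ> inv_into (H \<times> UNIV) e"
  show thesis
  proof (rule that[of ?\<psi>])
    fix h and a :: int assume "h \<in> H"
    then show "?\<psi> (h \<otimes> g [^] a) = \<phi> h \<otimes> g' [^] a"
      using inv_into_f_f[OF inj, of "(h, a)"] by (simp add: e_def)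
  qed
qed

lemma adjoin_extend_hom:
  assumes H: "subgroup H G" and H': "subgroup H' G" and g: "g \<in> carrier G" and g': "g' \<in> carrier G"
    and \<phi>: "\<phi> \<in> hom (G\<lparr>carrier := H\<rparr>) (G\<lparr>carrier := H'\<rparr>)"
    and \<psi>: "\<And>h a. h \<in> H \<Longrightarrow> \<psi> (h \<otimes> g [^] (a::int)) = \<phi> h \<otimes> g' [^] a"
  shows "\<psi> \<in> hom (G\<lparr>carrier := adjoin G H g\<rparr>) (G\<lparr>carrier := adjoin G H' g'\<rparr>)"
proof (rule homI)
  have \<phi>H: "\<phi> h \<in> H'" "\<phi> (h \<otimes> h2) = \<phi> h \<otimes> \<phi> h2" if "h \<in> H" "h2 \<in> H" for h h2
    using \<phi> that by (auto simp: hom_def)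
  have Hc: "h \<in> carrier G" "\<phi> h \<in> carrier G" if "h \<in> H" for h
    using that \<phi>H H H' by (auto simp: subgroup.mem_carrier)
  fix x y
  assume "x \<in> carrier (G\<lparr>carrier := adjoin G H g\<rparr>)" "y \<in> carrier (G\<lparr>carrier := adjoin G H g\<rparr>)"
  then obtain h1 h2 and a1 a2 :: int where
    x: "h1 \<in> H" "x = h1 \<otimes> g [^] a1" and y: "h2 \<in> H" "y = h2 \<otimes> g [^] a2"
    by (auto elim!: adjoin_memE)
  show "\<psi> x \<in> carrier (G\<lparr>carrier := adjoin G H' g'\<rparr>)"
    using x \<psi> \<phi>H by (auto intro!: adjoin_memI)
  have "x \<otimes> y = (h1 \<otimes> h2) \<otimes> g [^] (a1 + a2)" using x y Hc g by (simp add: int_pow_mult m_ac)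
  then have "\<psi> (x \<otimes> y) = \<phi> (h1 \<otimes> h2) \<otimes> g' [^] (a1 + a2)"
    using x y H by (simp add: \<psi> subgroup.m_closed)
  also have "\<dots> = \<psi> x \<otimes> \<psi> y" using x y Hc g' \<phi>H \<psi> by (simp add: int_pow_mult m_ac)
  finally show "\<psi> (x \<otimes>\<^bsub>G\<lparr>carrier := adjoin G H g\<rparr>\<^esub> y) =
      \<psi> x \<otimes>\<^bsub>G\<lparr>carrier := adjoin G H' g'\<rparr>\<^esub> \<psi> y"
    by simp
qed

lemma adjoin_iso:
  assumes H: "subgroup H G" and H': "subgroup H' G" and g: "g \<in> carrier G" and g': "g' \<in> carrier G"
    and free: "free_over G H g" and free': "free_over G H' g'"
    and \<phi>: "\<phi> \<in> iso (G\<lparr>carrier := H\<rparr>) (G\<lparr>carrier := H'\<rparr>)"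
  obtains \<psi> where "\<psi> \<in> iso (G\<lparr>carrier := adjoin G H g\<rparr>) (G\<lparr>carrier := adjoin G H' g'\<rparr>)"
    and "\<forall>h\<in>H. \<psi> h = \<phi> h"
proof -
  have \<phi>H: "\<phi> ` H = H'" "inj_on \<phi> H" using \<phi> by (auto simp: iso_iff)
  obtain \<psi> where \<psi>: "\<And>h a. h \<in> H \<Longrightarrow> \<psi> (h \<otimes> g [^] (a::int)) = \<phi> h \<otimes> g' [^] a"
    using adjoin_extend_map[OF H g free] by blast
  have hom: "\<psi> \<in> hom (G\<lparr>carrier := adjoin G H g\<rparr>) (G\<lparr>carrier := adjoin G H' g'\<rparr>)"
    using adjoin_extend_hom[OF H H' g g' _ \<psi>] \<phi> by (simp add: iso_iff)
  have "adjoin G H' g' \<subseteq> \<psi> ` adjoin G H g"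
  proof
    fix y assume "y \<in> adjoin G H' g'"
    then obtain h' and a :: int where "h' \<in> H'" "y = h' \<otimes> g' [^] a" by (rule adjoin_memE)
    then obtain h where "h \<in> H" "y = \<psi> (h \<otimes> g [^] a)" using \<phi>H(1) \<psi> by auto
    then show "y \<in> \<psi> ` adjoin G H g" by (auto intro: adjoin_memI)
  qed
  then have "\<psi> ` adjoin G H g = adjoin G H' g'" using hom by (auto simp: hom_def)
  moreover have "inj_on \<psi> (adjoin G H g)"
  proof (rule inj_onI)
    fix x y assume "x \<in> adjoin G H g" "y \<in> adjoin G H g" and eq: "\<psi> x = \<psi> y"
    then obtain h1 h2 and a1 a2 :: int where
      x: "h1 \<in> H" "x = h1 \<otimes> g [^] a1" and y: "h2 \<in> H" "y = h2 \<otimes> g [^] a2"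
      by (auto elim!: adjoin_memE)
    have "\<phi> h1 \<otimes> g' [^] a1 = \<phi> h2 \<otimes> g' [^] a2" using eq x y \<psi> by simp
    then have "\<phi> h1 = \<phi> h2 \<and> a1 = a2"
      using adjoin_decomp_unique[OF H' g' free'] x(1) y(1) \<phi>H(1) by blast
    then show "x = y" using x y \<phi>H(2) by (auto dest: inj_onD)
  qed
  moreover have "\<psi> h = \<phi> h" if h: "h \<in> H" for h
  proof -
    have "h \<in> carrier G" "\<phi> h \<in> carrier G"
      using h \<phi>H(1) subgroup.mem_carrier[OF H] subgroup.mem_carrier[OF H'] by auto
    then show ?thesis using \<psi>[OF h, of 0] by simp
  qed
  ultimately show thesis using that hom by (simp add: iso_iff)
qed

lemma free_extension_iso:
  "free_extension G C n B \<Longrightarrow> free_extension G C n B' \<Longrightarrow>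
   \<exists>\<phi> \<in> iso (G\<lparr>carrier := B\<rparr>) (G\<lparr>carrier := B'\<rparr>). \<forall>c\<in>C. \<phi> c = c"
proof (induction arbitrary: B' rule: free_extension.induct)
  case base
  have "B' = C" using base.prems by (cases rule: free_extension.cases) auto
  then show ?case using iso_set_refl[of "G\<lparr>carrier := C\<rparr>"] by auto
next
  case (step n H g)
  from step.prems obtain H' g' where
    B': "B' = adjoin G H' g'" "free_extension G C n H'" "g' \<in> carrier G" "free_over G H' g'"
    by (cases rule: free_extension.cases) auto
  obtain \<phi> where \<phi>: "\<phi> \<in> iso (G\<lparr>carrier := H\<rparr>) (G\<lparr>carrier := H'\<rparr>)" "\<forall>c\<in>C. \<phi> c = c"
    using step.IH B'(2) by blast
  have H: "subgroup H G" "C \<subseteq> H" and H': "subgroup H' G"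
    using free_extension_subgroup step.hyps(1) B'(2) by auto
  obtain \<psi> where "\<psi> \<in> iso (G\<lparr>carrier := adjoin G H g\<rparr>) (G\<lparr>carrier := B'\<rparr>)" "\<forall>h\<in>H. \<psi> h = \<phi> h"
    using adjoin_iso[OF H(1) H' step.hyps(2) B'(3) step.hyps(3) B'(4) \<phi>(1)] B'(1) by blast
  then show ?case using \<phi>(2) H(2) by (metis subsetD)
qed

end

section \<open>Classification of intermediate subgroups\<close>

locale generated_comm_group = comm_group +
  fixes gens :: "'a list"
  assumes gens_carrier: "set gens \<subseteq> carrier G"
    and span_gens: "carrier G \<subseteq> span_over G {\<one>} gens"
begin

lemma subgroup_span_over_gens:
  assumes "subgroup B G"
  obtains bs where "set bs \<subseteq> B" "length bs \<le> length gens" "B = span_over G {\<one>} bs"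
  using subgroup_of_span_over[OF gens_carrier assms] span_gens subgroup.subset[OF assms] that
  by blast

lemma saturated_adjoin_cases:
  assumes D: "subgroup D G" and B: "subgroup B G" and DB: "D \<subseteq> B"
    and satD: "saturation G B D \<subseteq> D"
    and g: "g \<in> B" and tors: "saturation G B (adjoin G D g) = B"
  obtains "B = D" | f where "f \<in> carrier G" "free_over G D f" "B = adjoin G D f"
proof (cases "free_over G D g")
  case True
  obtain bs where bs: "set bs \<subseteq> B" "B = span_over G {\<one>} bs" using subgroup_span_over_gens[OF B] .
  have bsc: "set bs \<subseteq> carrier G" using bs(1) subgroup.subset[OF B] by (rule order.trans)
  obtain f where "f \<in> B" "free_over G D f" "B = adjoin G D f"
    by (rule split_off_free_generator[OF D bsc bs(2) DB satD g True tors])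
  then show thesis using that(2) subgroup.mem_carrier[OF B] by blast
next
  case False
  then obtain a :: int where "a \<noteq> 0" "g [^] a \<in> D" unfolding free_over_def by blast
  then have "g \<in> D" using satD saturation_int_pow[OF D g subgroup.mem_carrier[OF B g]] by blast
  then have "adjoin G D g \<subseteq> D" by (rule adjoin_subset[OF D order.refl])
  have "B = saturation G B (adjoin G D g)" using tors by simp
  also have "\<dots> \<subseteq> saturation G B D" by (rule saturation_mono) fact
  also have "\<dots> \<subseteq> D" by (rule satD)
  finally show thesis using DB that(1) by blast
qed

lemma free_extension_of_saturated:
  "subgroup C G \<Longrightarrow> subgroup B G \<Longrightarrow> C \<subseteq> B \<Longrightarrow> saturation G B C \<subseteq> C \<Longrightarrow> set gs \<subseteq> B \<Longrightarrow>
   saturation G B (span_over G C gs) = B \<Longrightarrow> \<exists>k\<le>length gs. free_extension G C k B"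
proof (induction gs arbitrary: B)
  case Nil
  then have "B = C" by auto
  then show ?case using free_extension.base[OF Nil.prems(1)] by auto
next
  case (Cons g hs)
  note C = Cons.prems(1) and B = Cons.prems(2)
  have hs: "set hs \<subseteq> B" and g: "g \<in> B" using Cons.prems(5) by auto
  have hsc: "set hs \<subseteq> carrier G" using hs subgroup.subset[OF B] by (rule order.trans)
  define K where "K = span_over G C hs"
  have K: "subgroup K G" unfolding K_def by (rule span_over_subgroup[OF C hsc])
  have KB: "K \<subseteq> B" unfolding K_def by (rule span_over_subset[OF B Cons.prems(3) hs])
  define D where "D = saturation G B K"
  have D: "subgroup D G" unfolding D_def by (rule saturation_subgroup[OF B K])
  have DB: "D \<subseteq> B" and KD: "K \<subseteq> D" using subset_saturation[OF B KB] by (auto simp: D_def saturation_def)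
  have satD: "saturation G B D \<subseteq> D"
    unfolding D_def by (rule saturation_saturation_subset[OF subgroup.subset[OF B]])
  obtain k where k: "k \<le> length hs" "free_extension G C k D"
  proof -
    have "C \<subseteq> D" using subset_span_over[OF C hsc] KD by (auto simp: K_def)
    moreover have "saturation G D C \<subseteq> C" using Cons.prems(4) DB by (auto simp: saturation_def)
    moreover have "set hs \<subseteq> D" using generators_subset_span_over[OF C hsc] KD by (auto simp: K_def)
    moreover have "saturation G D (span_over G C hs) = D" by (auto simp: D_def K_def saturation_def)
    ultimately show thesis using Cons.IH[OF C D] that by blast
  qed
  have "B = saturation G B (adjoin G K g)" using Cons.prems(6) by (simp add: K_def)
  also have "\<dots> \<subseteq> saturation G B (adjoin G D g)" by (intro saturation_mono adjoin_mono KD)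
  finally have torsD: "saturation G B (adjoin G D g) = B" by (auto simp: saturation_def)
  from saturated_adjoin_cases[OF D B DB satD g torsD] show ?case
  proof cases
    case 1
    then show ?thesis using k by (intro exI[of _ k]) simp
  next
    case (2 f)
    then have "free_extension G C (Suc k) B" using free_extension.step[OF k(2)] by simp
    then show ?thesis using k(1) by (intro exI[of _ "Suc k"]) simp
  qed
qed

lemma free_extension_over_saturation:
  assumes A: "subgroup A G" and B: "subgroup B G" and AB: "A \<subseteq> B"
  obtains k where "k \<le> length gens" "free_extension G (saturation G B A) k B"
proof -
  obtain bs where bs: "set bs \<subseteq> B" "length bs \<le> length gens" "B = span_over G {\<one>} bs"
    using subgroup_span_over_gens[OF B] .
  define C where "C = saturation G B A"
  have C: "subgroup C G" unfolding C_def by (rule saturation_subgroup[OF B A])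
  have CB: "C \<subseteq> B" by (auto simp: C_def saturation_def)
  have "B \<subseteq> span_over G C bs"
    using bs(3) span_over_mono[of "{\<one>}" C bs] subgroup.one_closed[OF C] by auto
  moreover have "span_over G C bs \<subseteq> B" by (rule span_over_subset[OF B CB bs(1)])
  ultimately have "saturation G B (span_over G C bs) = B"
    using subset_saturation[OF B] by (auto simp: saturation_def)
  moreover have "saturation G B C \<subseteq> C"
    unfolding C_def by (rule saturation_saturation_subset[OF subgroup.subset[OF B]])
  ultimately obtain k where "k \<le> length bs" "free_extension G C k B"
    using free_extension_of_saturated[OF C B CB _ bs(1)] by blast
  then show thesis using bs(2) by (intro that[of k]) (simp_all add: C_def)
qed

lemma finite_subgroups_below_saturation:
  assumes A: "subgroup A G"
  shows "finite {C. subgroup C G \<and> A \<subseteq> C \<and> C \<subseteq> saturation G (carrier G) A}"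
proof -
  define A' where "A' = saturation G (carrier G) A"
  have A': "subgroup A' G" unfolding A'_def by (rule saturation_subgroup[OF subgroup_self A])
  obtain hs where hs: "set hs \<subseteq> A'" "A' = span_over G {\<one>} hs" using subgroup_span_over_gens[OF A'] .
  have hsc: "set hs \<subseteq> carrier G" using hs(1) subgroup.subset[OF A'] by (rule order.trans)
  have "\<forall>h\<in>set hs. \<exists>m::nat. m > 0 \<and> h [^] m \<in> A" using hs(1) by (auto simp: A'_def saturation_def)
  then obtain R where R: "finite R" "R \<subseteq> carrier G" "span_over G A hs \<subseteq> A <#> R"
    using span_over_finite_cosets[OF A hsc] by blast
  have "A' \<subseteq> span_over G A hs" using hs(2) span_over_mono[of "{\<one>}" A hs] subgroup.one_closed[OF A] by auto
  then have A'R: "A' \<subseteq> A <#> R" using R(3) by (rule order.trans)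
  have "finite {C. subgroup C G \<and> A \<subseteq> C \<and> C \<subseteq> A <#> R}"
    by (rule finite_subgroups_between[OF A R(1,2)])
  then show ?thesis by (rule finite_subset[rotated]) (use A'R in \<open>unfold A'_def, blast\<close>)
qed

end

lemma (in comm_group) generated_comm_group_of_fin_gen:
  assumes "fin_gen_group G"
  obtains gens where "generated_comm_group G gens"
proof -
  obtain S where S: "finite S" "S \<subseteq> carrier G" "generate G S = carrier G"
    using assms unfolding fin_gen_group_def by blast
  obtain gens where gens: "set gens = S" using finite_list[OF S(1)] by blast
  have "carrier G \<subseteq> span_over G {\<one>} gens"
    using generate_subgroup_incl[OF _ span_over_subgroup[OF triv_subgroup]]
      generators_subset_span_over[OF triv_subgroup] gens S by metis
  then have "generated_comm_group G gens"
    using gens S(2) by unfold_locales auto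
  then show thesis by (rule that)
qed

lemma (in comm_group) free_extension_rel_equiv:
  assumes "free_extension G C k B" "free_extension G C k B'" "A \<subseteq> C"
  shows "rel_equiv G A B B'"
proof -
  obtain \<phi> where "\<phi> \<in> iso (G\<lparr>carrier := B\<rparr>) (G\<lparr>carrier := B'\<rparr>)" "\<forall>c\<in>C. \<phi> c = c"
    using free_extension_iso[OF assms(1,2)] by blast
  then show ?thesis using assms(3) unfolding rel_equiv_def by (intro bexI[of _ \<phi>]) auto
qed

lemma rel_equiv_trans:
  assumes "rel_equiv G A B1 B2" "rel_equiv G A B2 B3"
  shows "rel_equiv G A B1 B3"
proof -
  obtain f1 f2 where
    f1: "f1 \<in> iso (G\<lparr>carrier := B1\<rparr>) (G\<lparr>carrier := B2\<rparr>)" "\<forall>a\<in>A. f1 a = a" and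
    f2: "f2 \<in> iso (G\<lparr>carrier := B2\<rparr>) (G\<lparr>carrier := B3\<rparr>)" "\<forall>a\<in>A. f2 a = a"
    using assms unfolding rel_equiv_def by blast
  have "f2 \<circ> f1 \<in> iso (G\<lparr>carrier := B1\<rparr>) (G\<lparr>carrier := B3\<rparr>)" by (rule iso_set_trans[OF f1(1) f2(1)])
  then show ?thesis using f1(2) f2(2) unfolding rel_equiv_def by (intro bexI[of _ "f2 \<circ> f1"]) auto
qed

lemma (in comm_group) rel_equiv_rel_Image_subset:
  assumes "free_extension G C k B" "free_extension G C k B'" "A \<subseteq> C"
    and "B' \<in> intermediate_subgroups G A"
  shows "rel_equiv_rel G A `` {B} \<subseteq> rel_equiv_rel G A `` {B'}"
proof
  fix B'' assume "B'' \<in> rel_equiv_rel G A `` {B}"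
  then have "rel_equiv G A B B''" "B'' \<in> intermediate_subgroups G A"
    by (auto simp: rel_equiv_rel_def)
  then show "B'' \<in> rel_equiv_rel G A `` {B'}"
    using rel_equiv_trans[OF free_extension_rel_equiv[OF assms(2,1,3)]] assms(4)
    by (auto simp: rel_equiv_rel_def)
qed

lemma finite_quotient_by_labels:
  assumes "finite L"
    and "\<And>x. x \<in> S \<Longrightarrow> \<exists>l\<in>L. lab x l"
    and "\<And>x y l. x \<in> S \<Longrightarrow> y \<in> S \<Longrightarrow> lab x l \<Longrightarrow> lab y l \<Longrightarrow> r `` {x} \<subseteq> r `` {y}"
  shows "finite (S // r)"
proof -
  define rep where "rep l = (SOME x. x \<in> S \<and> lab x l)" for l
  have "S // r \<subseteq> (\<lambda>l. r `` {rep l}) ` L"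
  proof
    fix Q assume "Q \<in> S // r"
    then obtain x where x: "x \<in> S" "Q = r `` {x}" by (auto elim: quotientE)
    obtain l where l: "l \<in> L" "lab x l" using assms(2) x(1) by blast
    have "rep l \<in> S \<and> lab (rep l) l" unfolding rep_def by (rule someI[of _ x]) (use x l in blast)
    then have "r `` {x} = r `` {rep l}" using assms(3) x(1) l(2) by blast
    then show "Q \<in> (\<lambda>l. r `` {rep l}) ` L" using x(2) l(1) by blast
  qed
  then show ?thesis using assms(1) by (rule finite_subset[OF _ finite_imageI])
qed

theorem lemma2p3:
  fixes P :: "('a, 'b) monoid_scheme" and A :: "'a set"
  assumes "comm_group P" and "fin_gen_group P" and "subgroup A P"
  shows "finite (intermediate_subgroups P A // rel_equiv_rel P A)"
proof -
  interpret comm_group P by fact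
  obtain gens where "generated_comm_group P gens"
    using generated_comm_group_of_fin_gen assms(2) by blast
  then interpret generated_comm_group P gens .
  define Cs where "Cs = {C. subgroup C P \<and> A \<subseteq> C \<and> C \<subseteq> saturation P (carrier P) A}"
  define labelled where
    "labelled B l \<longleftrightarrow> fst l = saturation P B A \<and> free_extension P (fst l) (snd l) B" for B l
  show ?thesis
  proof (rule finite_quotient_by_labels[where L = "Cs \<times> {..length gens}" and lab = labelled])
    show "finite (Cs \<times> {..length gens})"
      using finite_subgroups_below_saturation[OF assms(3)] by (simp add: Cs_def)
  next
    fix B assume "B \<in> intermediate_subgroups P A"
    then have B: "subgroup B P" "A \<subseteq> B" by (simp_all add: intermediate_subgroups_def)
    obtain k where "k \<le> length gens" "free_extension P (saturation P B A) k B"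
      using free_extension_over_saturation[OF assms(3) B] .
    then show "\<exists>l\<in>Cs \<times> {..length gens}. labelled B l"
      using saturation_mem_subgroups_below[OF assms(3) B] by (auto simp: Cs_def labelled_def)
  next
    fix B B' l assume B: "B \<in> intermediate_subgroups P A" and B': "B' \<in> intermediate_subgroups P A"
      and lab: "labelled B l" "labelled B' l"
    have "A \<subseteq> fst l" using lab(1) B subset_saturation by (auto simp: labelled_def intermediate_subgroups_def)
    moreover have "free_extension P (fst l) (snd l) B" "free_extension P (fst l) (snd l) B'"
      using lab unfolding labelled_def by blast+
    ultimately show "rel_equiv_rel P A `` {B} \<subseteq> rel_equiv_rel P A `` {B'}"
      using rel_equiv_rel_Image_subset B' by blast
  qed
qed

end
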